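(* Let $T=7$ (so $\mathit{CP}=\{0\}$) and $D\ge 1$. Let $G$ be the path $v_0 - v_1 - \dots - v_D$, and suppose the adversary activates only $v_0$, in round $0$ (all other nodes are activated by beeps of neighbors). Then under Algorithm FS, the smallest round $t$ such that $\delta_t(v_0)=\delta_t(v_1)=\dots=\delta_t(v_D)$ (with all nodes active) is exactly $t=7D$. Hence the bound $4D+\lfloor D/\lfloor T/4\rfloor\rfloor\cdot(T\bmod 4)$ of Theorem 1 is attained.
   Context: Model (beeping model with arbitrary activations). Synchronous rounds; in each round each active node either beeps or listens; a listening node learns only whether at least one neighbor beeped. Checkpoints: $\mathit{CP}=\{c\in\mathbb{N}_0: c\equiv 0\pmod 4,\ T-c>3\}$. Algorithm FS. Each node $v$ stores $\delta(v)\in\{0,\dots,T-1\}$, $\mathit{State}(v)\in\{\mathit{Inactive},\mathit{Beep},\mathit{Listen}\}$, $\mathit{Induced}(v)\in\{\mathit{true},\mathit{false}\}$. Initially all nodes are Inactive. A node $v$ is activated in round $t$ if the adversary activates it in round $t$, or $v$ is inactive and some neighbor beeps in round $t-1$; then at the beginning of round $t$, $\delta(v)=1$, $\mathit{State}(v)=\mathit{Beep}$, $\mathit{Induced}(v)=\mathit{true}$. In each round each active node $v$, according to its state at the beginning of the round: (1) if $\mathit{State}(v)=\mathit{Beep}$: beeps; $\delta(v)\gets\delta(v)+1\bmod T$; $\mathit{State}(v)\gets\mathit{Listen}$; (2) if $\mathit{State}(v)=\mathit{Listen}$ and some neighbor beeps: if $\delta(v)\equiv c-1\pmod T$ for some $c\in\mathit{CP}$,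 then $\delta(v)\gets\delta(v)+2\bmod T$, $\mathit{State}(v)\gets\mathit{Beep}$, $\mathit{Induced}(v)\gets\mathit{true}$; else $\delta(v)\gets\delta(v)+1\bmod T$; (3) if $\mathit{State}(v)=\mathit{Listen}$ and no neighbor beeps: $\delta(v)\gets\delta(v)+1\bmod T$; then if ($\mathit{Induced}(v)=\mathit{true}$ and new $\delta(v)\in\mathit{CP}$) or new $\delta(v)=0$: $\mathit{State}(v)\gets\mathit{Beep}$, $\mathit{Induced}(v)\gets\mathit{false}$. $\delta_t(v)$ denotes the value at the beginning of round $t$. *)

theory Defs
  imports Main
begin

datatype phase = Beep | Listen

text \<open>Local state of a node: Inactive, or active with delta value, State (Beep/Listen),
  and Induced flag.\<close>
datatype nstate = Inactive | Act nat phase bool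

definition is_CP :: "nat \<Rightarrow> nat \<Rightarrow> bool" where
  "is_CP T c \<longleftrightarrow> c mod 4 = 0 \<and> int T - int c > 3"

fun beeps :: "nstate \<Rightarrow> bool" where
  "beeps (Act d Beep ind) = True"
| "beeps _ = False"

fun is_active :: "nstate \<Rightarrow> bool" where
  "is_active Inactive = False"
| "is_active (Act d p ind) = True"

fun delta_of :: "nstate \<Rightarrow> nat" where
  "delta_of (Act d p ind) = d"
| "delta_of Inactive = 0"

fun node_step :: "nat \<Rightarrow> nstate \<Rightarrow> bool \<Rightarrow> nstate" where
  "node_step T Inactive heard = (if heard then Act 1 Beep True else Inactive)"
| "node_step T (Act d Beep ind) heard = Act ((d + 1) mod T) Listen ind"
| "node_step T (Act d Listen ind) heard =
     (if heard then
        (if \<exists>c. is_CP T c \<and> int d mod int T = (int c - 1) mod int T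
         then Act ((d + 2) mod T) Beep True
         else Act ((d + 1) mod T) Listen ind)
      else
        (let d' = (d + 1) mod T in
         if (ind \<and> is_CP T d') \<or> d' = 0 then Act d' Beep False else Act d' Listen ind))"

definition adv_act :: "bool \<Rightarrow> nstate \<Rightarrow> nstate" where
  "adv_act a s = (if a then Act 1 Beep True else s)"

text \<open>Execution of Algorithm FS: E is the (symmetric) adjacency relation,
  A t v means the adversary activates v in round t.
  fs_run T E A t v is the state of v at the beginning of round t.\<close>
fun fs_run :: "nat \<Rightarrow> (nat \<Rightarrow> nat \<Rightarrow> bool) \<Rightarrow> (nat \<Rightarrow> nat \<Rightarrow> bool) \<Rightarrow> nat \<Rightarrow> nat \<Rightarrow> nstate" where
  "fs_run T E A 0 v = adv_act (A 0 v) Inactive"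
| "fs_run T E A (Suc t) v =
     adv_act (A (Suc t) v)
       (node_step T (fs_run T E A t v) (\<exists>u. E v u \<and> beeps (fs_run T E A t u)))"

definition path_adj :: "nat \<Rightarrow> nat \<Rightarrow> nat \<Rightarrow> bool" where
  "path_adj D i j \<longleftrightarrow> i \<le> D \<and> j \<le> D \<and> (j = i + 1 \<or> i = j + 1)"

definition synced :: "nat \<Rightarrow> (nat \<Rightarrow> nat \<Rightarrow> bool) \<Rightarrow> (nat \<Rightarrow> nat \<Rightarrow> bool) \<Rightarrow> nat \<Rightarrow> nat \<Rightarrow> bool" where
  "synced T E A D t \<longleftrightarrow>
     (\<forall>i\<le>D. is_active (fs_run T E A t i)) \<and>
     (\<forall>i\<le>D. delta_of (fs_run T E A t i) = delta_of (fs_run T E A t 0))"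

end

theory Submission imports Defs begin

text \<open>Node \<open>v\<^sub>i\<close> is woken in round \<open>i\<close> with
  \<open>\<delta> = 1\<close>; while \<open>v\<^sub>i\<^sub>-\<^sub>1\<close> still runs its induced 6-round cycle, its beep arrives exactly when
  \<open>v\<^sub>i\<close> listens with \<open>\<delta> = 6\<close> and resets \<open>v\<^sub>i\<close> to \<open>\<delta> = 1\<close>, so \<open>v\<^sub>i\<close> also repeats a 6-round cycle.
  Node \<open>v\<^sub>0\<close> is never reset and falls into the free 7-cycle at round 6; inductively \<open>v\<^sub>i\<close> loses
  its last reset and joins the free 7-cycle \<open>\<delta>\<^sub>t = (t + 1) mod 7\<close> at round \<open>7i + 6\<close>.
  At round \<open>7D\<close> the last node has \<open>\<delta> = 1\<close>, agreeing with the free cycle, while in every earlier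
  round \<open>v\<^sub>D\<close> and \<open>v\<^sub>D\<^sub>-\<^sub>1\<close> still disagree.\<close>

abbreviation path_run :: "nat \<Rightarrow> nat \<Rightarrow> nat \<Rightarrow> nstate" where
  "path_run D \<equiv> fs_run 7 (path_adj D) (\<lambda>t v. t = 0 \<and> v = 0)"

definition wave_state :: "nat \<Rightarrow> nat \<Rightarrow> nstate" where
  "wave_state i t =
    (if t < i then Inactive
     else if t < 7 * i + 6
     then Act ((t - i) mod 6 + 1) (if (t - i) mod 6 = 0 then Beep else Listen) True
     else Act ((t + 1) mod 7) (if (t + 1) mod 7 = 0 then Beep else Listen) False)"

definition wave_beeps :: "nat \<Rightarrow> nat \<Rightarrow> bool" where
  "wave_beeps i t \<longleftrightarrow>
     i \<le> t \<and> (if t < 7 * i + 6 then (t - i) mod 6 = 0 else (t + 1) mod 7 = 0)"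

definition wave_hears :: "nat \<Rightarrow> nat \<Rightarrow> nat \<Rightarrow> bool" where
  "wave_hears D v t \<longleftrightarrow> (0 < v \<and> wave_beeps (v - 1) t) \<or> (v < D \<and> wave_beeps (v + 1) t)"

lemma beeps_wave_state: "beeps (wave_state i t) = wave_beeps i t"
  by (simp add: wave_state_def wave_beeps_def)

lemma is_CP_7_iff: "is_CP 7 c \<longleftrightarrow> c = 0"
  unfolding is_CP_def by presburger

lemma node_step_7_Listen:
  "node_step 7 (Act d Listen ind) heard =
    (if heard then
       if d mod 7 = 6 then Act ((d + 2) mod 7) Beep True else Act ((d + 1) mod 7) Listen ind
     else if (d + 1) mod 7 = 0 then Act 0 Beep False else Act ((d + 1) mod 7) Listen ind)"
proof -
  have "int d mod 7 = int (d mod 7)"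
    by (simp add: zmod_int)
  then have "int d mod 7 = -1 mod 7 \<longleftrightarrow> d mod 7 = 6"
    by simp
  then show ?thesis
    by (auto simp: is_CP_7_iff Let_def)
qed

declare node_step.simps(3) [simp del] node_step_7_Listen [simp]

lemma wave_hears_before_activation:
  assumes "t < v"
  shows "wave_hears D v t \<longleftrightarrow> Suc t = v"
  using assms unfolding wave_hears_def wave_beeps_def by (cases "Suc t = v") auto

lemma wave_hears_reset:
  assumes "v \<le> t" "t < 7 * v + 5" "(t - v) mod 6 = 5"
  shows "wave_hears D v t"
proof -
  define q where "q = (t - v) div 6"
  have t: "t = v + 6 * q + 5"
    using assms(1,3) div_mult_mod_eq[of "t - v" 6] unfolding q_def by simp
  have "q < v"
    using assms(2) t by simp
  then consider "q < v - 1" | "q = v - 1"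
    by linarith
  then have "wave_beeps (v - 1) t"
  proof cases
    case 1
    have "t - (v - 1) = 6 * (q + 1)"
      using t \<open>q < v\<close> by simp
    then show ?thesis
      using 1 t unfolding wave_beeps_def by auto
  next
    case 2
    have "t + 1 = 7 * v"
      using t 2 \<open>q < v\<close> by (cases v) simp_all
    then have "(t + 1) mod 7 = 0" "\<not> t < 7 * (v - 1) + 6"
      by simp_all
    then show ?thesis
      using t unfolding wave_beeps_def by auto
  qed
  then show ?thesis
    using \<open>q < v\<close> unfolding wave_hears_def by simp
qed

lemma wave_hears_release:
  assumes "t = 7 * v + 5"
  shows "\<not> wave_hears D v t"
proof -
  have "t + 1 = 6 + 7 * v" "t - (v + 1) = 4 + 6 * v"
    using assms by simp_all
  then have "(t + 1) mod 7 = 6" "(t - (v + 1)) mod 6 = 4"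
    by simp_all
  moreover have "\<not> t < 7 * (v - 1) + 6" if "0 < v"
    using assms that by (cases v) auto
  ultimately show ?thesis
    using assms unfolding wave_hears_def wave_beeps_def by auto
qed

lemma wave_hears_free:
  assumes "7 * v + 6 \<le> t" "(t + 1) mod 7 = 6"
  shows "\<not> wave_hears D v t"
proof -
  have "\<not> wave_beeps (v + 1) t"
  proof
    assume beep: "wave_beeps (v + 1) t"
    define k where "k = (t + 1) div 7"
    have t: "t = 7 * k + 5"
      using assms(2) div_mult_mod_eq[of "t + 1" 7] unfolding k_def by simp
    have "t < 7 * (v + 1) + 6"
      using beep assms(2) unfolding wave_beeps_def by (auto split: if_splits)
    then have "k = v + 1"
      using t assms(1) by presburger
    then have "(t - (v + 1)) mod 6 = 5"
      using t by simp
    then show False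
      using beep \<open>t < 7 * (v + 1) + 6\<close> unfolding wave_beeps_def by simp
  qed
  then show ?thesis
    using assms unfolding wave_hears_def wave_beeps_def by auto
qed

lemma node_step_wave_state_induced:
  assumes "v \<le> t" "t < 7 * v + 6"
  shows "node_step 7 (wave_state v t) (wave_hears D v t) = wave_state v (Suc t)"
proof -
  define s where "s = (t - v) mod 6"
  have "s < 6"
    unfolding s_def by simp
  have state: "wave_state v t = Act (s + 1) (if s = 0 then Beep else Listen) True"
    using assms unfolding wave_state_def s_def by simp
  consider "t = 7 * v + 5" | "t \<noteq> 7 * v + 5" "s = 5" | "s < 5"
    using \<open>s < 6\<close> by linarith
  then show ?thesis
  proof cases
    case 1
    have "(Suc t + 1) mod 7 = 0"
      using 1 by simp
    moreover have "s = 5"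
      using 1 unfolding s_def by (simp add: mod_add_left_eq[of "6 * v" 6 5, symmetric])
    ultimately show ?thesis
      using 1 state wave_hears_release[OF 1]
      by (simp add: wave_state_def)
  next
    case 2
    have "(Suc t - v) mod 6 = 0"
      using 2 assms(1) unfolding s_def by (simp add: Suc_diff_le mod_Suc)
    then show ?thesis
      using 2 assms state wave_hears_reset[of v t D]
      by (simp add: wave_state_def s_def)
  next
    case 3
    have "(Suc t - v) mod 6 = s + 1"
      using 3 assms(1) unfolding s_def by (simp add: Suc_diff_le mod_Suc)
    moreover have "Suc t < 7 * v + 6"
      using 3 assms unfolding s_def by (cases "t = 7 * v + 5") simp_all
    ultimately show ?thesis
      using 3 assms state
      by (auto simp: wave_state_def)
  qed
qed

lemma node_step_wave_state_free:
  assumes "7 * v + 6 \<le> t"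
  shows "node_step 7 (wave_state v t) (wave_hears D v t) = wave_state v (Suc t)"
proof -
  define r where "r = (t + 1) mod 7"
  have "r < 7"
    unfolding r_def by simp
  have state: "wave_state v t = Act r (if r = 0 then Beep else Listen) False"
    using assms unfolding wave_state_def r_def by simp
  have state': "wave_state v (Suc t) =
      Act ((r + 1) mod 7) (if (r + 1) mod 7 = 0 then Beep else Listen) False"
    using assms unfolding wave_state_def r_def by (simp add: mod_Suc_eq)
  show ?thesis
  proof (cases "r = 6")
    case True
    then show ?thesis
      using state state' wave_hears_free[OF assms, of D]
      by (simp add: r_def)
  next
    case False
    then show ?thesis
      using state state' \<open>r < 7\<close> by (cases "r = 0") simp_all
  qed
qed

lemma node_step_wave_state:
  "node_step 7 (wave_state v t) (wave_hears D v t) = wave_state v (Suc t)"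
proof -
  consider "t < v" | "v \<le> t" "t < 7 * v + 6" | "7 * v + 6 \<le> t"
    by linarith
  then show ?thesis
  proof cases
    case 1
    then show ?thesis
      using wave_hears_before_activation[OF 1] by (auto simp: wave_state_def)
  qed (simp_all add: node_step_wave_state_induced node_step_wave_state_free)
qed

lemma ex_path_adj_iff:
  assumes "v \<le> D"
  shows "(\<exists>u. path_adj D v u \<and> P u) \<longleftrightarrow> (0 < v \<and> P (v - 1)) \<or> (v < D \<and> P (v + 1))"
proof
  assume "\<exists>u. path_adj D v u \<and> P u"
  then show "(0 < v \<and> P (v - 1)) \<or> (v < D \<and> P (v + 1))"
    unfolding path_adj_def by auto
next
  assume "(0 < v \<and> P (v - 1)) \<or> (v < D \<and> P (v + 1))"
  then show "\<exists>u. path_adj D v u \<and> P u"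
    using assms unfolding path_adj_def by (metis Suc_eq_plus1 Suc_pred' Suc_leI le_trans diff_le_self)
qed

lemma path_run_eq_wave_state:
  "path_run D t v = (if v \<le> D then wave_state v t else Inactive)"
proof (induction t arbitrary: v)
  case 0
  then show ?case
    by (auto simp: adv_act_def wave_state_def)
next
  case (Suc t)
  have heard: "(\<exists>u. path_adj D v u \<and> beeps (path_run D t u)) \<longleftrightarrow> wave_hears D v t"
    if "v \<le> D"
    using that unfolding ex_path_adj_iff[OF that] Suc.IH wave_hears_def
    by (auto simp: beeps_wave_state)
  show ?case
  proof (cases "v \<le> D")
    case True
    then show ?thesis
      using heard node_step_wave_state by (simp add: adv_act_def Suc.IH)
  next
    case False
    then show ?thesis
      using Suc.IH[of v] by (simp add: adv_act_def path_adj_def)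
  qed
qed

lemma wave_state_at_7D:
  assumes "i \<le> D"
  shows "wave_state i (7 * D) = Act 1 (if i = D then Beep else Listen) (i = D)"
proof (cases "i = D")
  case True
  have "(7 * D - D) mod 6 = 0"
    by simp
  then show ?thesis
    using True by (simp add: wave_state_def)
next
  case False
  then show ?thesis
    using assms by (simp add: wave_state_def)
qed

lemma wave_state_last_two_differ:
  assumes "1 \<le> D" "t < 7 * D" "is_active (wave_state D t)"
  shows "delta_of (wave_state D t) \<noteq> delta_of (wave_state (D - 1) t)"
proof -
  have "D \<le> t"
    using assms(3) by (auto simp: wave_state_def split: if_splits)
  then have last: "delta_of (wave_state D t) = (t - D) mod 6 + 1"
    using assms(2) by (simp add: wave_state_def)
  show ?thesis
  proof (cases "t < 7 * (D - 1) + 6")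
    case True
    have "t - (D - 1) = Suc (t - D)"
      using \<open>D \<le> t\<close> assms(1) by simp
    then have "(t - (D - 1)) mod 6 \<noteq> (t - D) mod 6"
      by (simp add: mod_Suc)
    then show ?thesis
      using True \<open>D \<le> t\<close> last by (simp add: wave_state_def)
  next
    case False
    then have "t + 1 = 7 * D"
      using assms(1,2) by linarith
    then have "delta_of (wave_state (D - 1) t) = 0"
      using False by (simp add: wave_state_def)
    then show ?thesis
      using last by simp
  qed
qed

theorem mainTheorem3:
  fixes D :: nat
  assumes "D \<ge> 1"
  shows "synced 7 (path_adj D) (\<lambda>t v. t = 0 \<and> v = 0) D (7 * D)
       \<and> (\<forall>t < 7 * D. \<not> synced 7 (path_adj D) (\<lambda>t v. t = 0 \<and> v = 0) D t)
       \<and> 7 * D = 4 * D + (D div (7 div 4)) * (7 mod 4)"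
proof (intro conjI allI impI)
  show "synced 7 (path_adj D) (\<lambda>t v. t = 0 \<and> v = 0) D (7 * D)"
    unfolding synced_def path_run_eq_wave_state by (simp add: wave_state_at_7D)
next
  fix t
  assume "t < 7 * D"
  show "\<not> synced 7 (path_adj D) (\<lambda>t v. t = 0 \<and> v = 0) D t"
  proof
    assume "synced 7 (path_adj D) (\<lambda>t v. t = 0 \<and> v = 0) D t"
    then have "is_active (wave_state D t)"
      "delta_of (wave_state D t) = delta_of (wave_state (D - 1) t)"
      unfolding synced_def path_run_eq_wave_state
      by (metis order_refl, metis diff_le_self order_refl)
    then show False
      using wave_state_last_two_differ[OF assms \<open>t < 7 * D\<close>] by simp
  qed
qed simp

end
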